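(* Consider any FEE problem $(I,O,\succsim_I,\omega)$ and any FTTC mechanism (any rule for choosing the ratio, quota and division matrices at each step). For every step $d\ge 1$ of the procedure such that $O(d)\neq\emptyset$ (so that step $d+1$ is executed and $\overline{O}(d)$ is defined), we have $\overline{O}(d)\subseteq \overline{O}(d-1)$.
   Context: Fractional endowment exchange (FEE) problem: a tuple $(I,O,\succsim_I,\omega)$ where $I$ is a finite set of agents, $O$ a finite set of objects, each agent $i$ has a complete and transitive (possibly non-strict) preference relation $\succsim_i$ over $O$ with asymmetric part $\succ_i$ and symmetric part $\sim_i$, and $\omega=(\omega_{i,o})_{i\in I,o\in O}$ is an endowment matrix with $\omega_{i,o}\in[0,1]$, $\sum_{o\in O}\omega_{i,o}\le 1$ for each $i$, and $q_o=\sum_{i\in I}\omega_{i,o}$ an integer for each $o$. An assignment is a nonnegative matrix $p=(p_{i,o})$ with $\sum_i p_{i,o}\le q_o$ for all $o$ and $\sum_o p_{i,o}\le 1$ for all $i$; $p_i=(p_{i,o})_{o\in O}$ is $i$'s lottery. FTTC (Fractional Top Trading Cycle) on the full preference domain. Initialize $\omega(0)=\omega$, $p(0)=0$, $O(0)=O$. At step $d\ge1$ (with $O(d-1)\ne\emptyset$): (i) Labeling. Put $T_0=O(d-1)$. For $k=1,2,\dots$: let $L_k$ be the set of agents $i\notin L_1\cup\dots\cup L_{k-1}$ for which there exist $o\in T_{k-1}$ and $o'\in O\setminus(T_0\cup\dots\cup T_{k-1})$ with $p_{i,o'}(d-1)>0$ and $o\sim_i o'$; for $i\in L_k$ let $\tilde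 O_i(d-1)$ be the set of all such $o'$ for this $i$, and let $T_k=\bigcup_{i\in L_k}\tilde O_i(d-1)$. Stop at the first $k$ with $L_k=\emptyset$. Set $L(d-1)=\bigcup_k L_k$, $\tilde O(d-1)=\bigcup_{k\ge1}T_k$, $\overline{O}(d-1)=O(d-1)\cup\tilde O(d-1)$, and $\tilde O_i(d-1)=\emptyset$ for $i\notin L(d-1)$. (ii) Pointing. The active agents are $I(d-1)=L(d-1)\cup\{i\in I:\sum_o\omega_{i,o}(d-1)>0\}$. For $i\in I(d-1)$ let $B_i$ be the set of $\succsim_i$-maximal elements of $\overline{O}(d-1)$, let $k_i$ be the least $k\ge0$ with $B_i\cap T_k\ne\emptyset$, and let $A_i(d)=B_i\cap T_{k_i}$. (iii) Trading. The mechanism chooses (possibly depending on the history): a ratio matrix $\lambda(d)=(\lambda_{i,o}(d))_{i\in I(d-1),o\in\overline{O}(d-1)}$, nonnegative, with $\sum_{i\in I(d-1)}\lambda_{i,o}(d)=1$ for each $o\in\overline O(d-1)$, $\lambda_{i,o}(d)>0$ only if $\omega_{i,o}(d-1)>0$ (for $o\in O(d-1)$) and only if $o\in\tilde O_i(d-1)$ (for $o\in\tilde O(d-1)$); a quota matrix $\beta(d)$ on $I(d-1)\times O(d-1)$ with $0\le\beta_{i,o}(d)\le\omega_{i,o}(d-1)$; a division matrix $\gamma(d)$ on $I(d-1)\times\overline O(d-1)$, nonnegative, with $\sum_o\gamma_{i,o}(d)=1$ and $\gamma_{i,o}(d)>0$ only if $o\in A_i(d)$. Let $x^*(d)=(x^*_a(d))_{a\in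 I(d-1)\cup\overline O(d-1)}$ be the maximum (componentwise largest) nonnegative solution of $x_o=\sum_{i\in I(d-1)}\gamma_{i,o}(d)x_i$ for all $o\in\overline O(d-1)$ and $x_i=\sum_{o\in\overline O(d-1)}\lambda_{i,o}(d)x_o$ for all $i\in I(d-1)$, subject to $\lambda_{i,o}(d)x_o\le\beta_{i,o}(d)$ for $o\in O(d-1)$ and $\lambda_{i,o}(d)x_o\le p_{i,o}(d-1)$ for $o\in\tilde O(d-1)$. For $i\in I(d-1)$: $\omega_{i,o}(d)=\omega_{i,o}(d-1)-\lambda_{i,o}(d)x^*_o(d)$ if $o\in O(d-1)$ and $0$ otherwise; $p_{i,o}(d)=p_{i,o}(d-1)-\mathbf 1[o\in\tilde O_i(d-1)]\lambda_{i,o}(d)x^*_o(d)+\gamma_{i,o}(d)x^*_i(d)$ (with $\gamma_{i,o}(d)=0$ for $o\notin\overline O(d-1)$). For $i\notin I(d-1)$, $\omega_i(d)=\omega_i(d-1)$, $p_i(d)=p_i(d-1)$. Let $O(d)=\{o\in O(d-1):\sum_i\omega_{i,o}(d)>0\}$. If $O(d)=\emptyset$ stop and output $p(d)$; otherwise go to step $d+1$. (Standing assumption: the maximum solution exists at each step and the procedure ends after finitely many steps.) An FTTC mechanism is specified by a rule choosing $\lambda(d),\beta(d),\gamma(d)$ at every step. *)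

theory Defs
  imports Complex_Main
begin

text \<open>Preferences: R i a b means a \<succsim>_i b.  Agents Ag, objects Obj (finite carrier sets).
  Matrices are functions 'i => 'o => real, only their values on the relevant index sets matter.\<close>

definition indiff :: "('i \<Rightarrow> 'o \<Rightarrow> 'o \<Rightarrow> bool) \<Rightarrow> 'i \<Rightarrow> 'o \<Rightarrow> 'o \<Rightarrow> bool" where
  "indiff R i a b \<longleftrightarrow> R i a b \<and> R i b a"

definition fee_problem ::
  "'i set \<Rightarrow> 'o set \<Rightarrow> ('i \<Rightarrow> 'o \<Rightarrow> 'o \<Rightarrow> bool) \<Rightarrow> ('i \<Rightarrow> 'o \<Rightarrow> real) \<Rightarrow> bool" where
  "fee_problem Ag Obj R \<omega> \<longleftrightarrow>
     finite Ag \<and> finite Obj \<and>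
     (\<forall>i\<in>Ag. (\<forall>a\<in>Obj. \<forall>b\<in>Obj. R i a b \<or> R i b a) \<and>
              (\<forall>a\<in>Obj. \<forall>b\<in>Obj. \<forall>c\<in>Obj. R i a b \<longrightarrow> R i b c \<longrightarrow> R i a c)) \<and>
     (\<forall>i\<in>Ag. \<forall>ob\<in>Obj. 0 \<le> \<omega> i ob \<and> \<omega> i ob \<le> 1) \<and>
     (\<forall>i\<in>Ag. (\<Sum>ob\<in>Obj. \<omega> i ob) \<le> 1) \<and>
     (\<forall>ob\<in>Obj. (\<Sum>i\<in>Ag. \<omega> i ob) \<in> \<int>)"

text \<open>Labeling.  lab ... k = (L_k, T_k, L_1 \<union> ... \<union> L_k, T_0 \<union> ... \<union> T_k), with T_0 = Oc = O(d-1),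
  P = p(d-1).  (Once L_k is empty, all later L, T are empty, so unions over all k agree with
  stopping at the first empty L_k.)\<close>

fun lab :: "'i set \<Rightarrow> 'o set \<Rightarrow> ('i \<Rightarrow> 'o \<Rightarrow> 'o \<Rightarrow> bool) \<Rightarrow> ('i \<Rightarrow> 'o \<Rightarrow> real) \<Rightarrow> 'o set
            \<Rightarrow> nat \<Rightarrow> 'i set \<times> 'o set \<times> 'i set \<times> 'o set" where
  "lab Ag Obj R P Oc 0 = ({}, Oc, {}, Oc)"
| "lab Ag Obj R P Oc (Suc k) = (case lab Ag Obj R P Oc k of (L, T, LU, TU) \<Rightarrow>
     (let L' = {i \<in> Ag - LU. \<exists>ob\<in>T. \<exists>o'\<in>Obj - TU. P i o' > 0 \<and> indiff R i ob o'};
          T' = (\<Union>i\<in>L'. {o' \<in> Obj - TU. P i o' > 0 \<and> (\<exists>ob\<in>T. indiff R i ob o')})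
      in (L', T', LU \<union> L', TU \<union> T')))"

definition layerL where "layerL Ag Obj R P Oc k = fst (lab Ag Obj R P Oc k)"
definition layerT where "layerT Ag Obj R P Oc k = fst (snd (lab Ag Obj R P Oc k))"

text \<open>The set tilde O_i computed at level k+1 (used for i in L_{k+1}).\<close>
definition otil_lvl where
  "otil_lvl Ag Obj R P Oc k i = (case lab Ag Obj R P Oc k of (L, T, LU, TU) \<Rightarrow>
      {o' \<in> Obj - TU. P i o' > 0 \<and> (\<exists>ob\<in>T. indiff R i ob o')})"

definition labeled where
  "labeled Ag Obj R P Oc = (\<Union>k. layerL Ag Obj R P Oc (Suc k))"

definition otil_agent where
  "otil_agent Ag Obj R P Oc i =
     (\<Union>k. if i \<in> layerL Ag Obj R P Oc (Suc k) then otil_lvl Ag Obj R P Oc k i else {})"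

definition otil where
  "otil Ag Obj R P Oc = (\<Union>k. layerT Ag Obj R P Oc (Suc k))"

definition obar where
  "obar Ag Obj R P Oc = Oc \<union> otil Ag Obj R P Oc"

definition active where
  "active Ag Obj R W P Oc = labeled Ag Obj R P Oc \<union> {i \<in> Ag. (\<Sum>ob\<in>Obj. W i ob) > 0}"

definition maxset where
  "maxset R Ob i = {ob \<in> Ob. \<forall>o'\<in>Ob. R i ob o'}"

definition pointA where
  "pointA Ag Obj R P Oc i =
     (let B = maxset R (obar Ag Obj R P Oc) i;
          k = (LEAST k. B \<inter> layerT Ag Obj R P Oc k \<noteq> {})
      in B \<inter> layerT Ag Obj R P Oc k)"

definition trade_feasible where
  "trade_feasible Iact Ob Oc Ot lam beta gam P xa xo \<longleftrightarrow>
     (\<forall>i\<in>Iact. xa i \<ge> 0) \<and> (\<forall>ob\<in>Ob. xo ob \<ge> 0) \<and>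
     (\<forall>ob\<in>Ob. xo ob = (\<Sum>i\<in>Iact. gam i ob * xa i)) \<and>
     (\<forall>i\<in>Iact. xa i = (\<Sum>ob\<in>Ob. lam i ob * xo ob)) \<and>
     (\<forall>i\<in>Iact. \<forall>ob\<in>Oc. lam i ob * xo ob \<le> beta i ob) \<and>
     (\<forall>i\<in>Iact. \<forall>ob\<in>Ot. lam i ob * xo ob \<le> P i ob)"

definition trade_max where
  "trade_max Iact Ob Oc Ot lam beta gam P xa xo \<longleftrightarrow>
     trade_feasible Iact Ob Oc Ot lam beta gam P xa xo \<and>
     (\<forall>ya yo. trade_feasible Iact Ob Oc Ot lam beta gam P ya yo \<longrightarrow>
        (\<forall>i\<in>Iact. ya i \<le> xa i) \<and> (\<forall>ob\<in>Ob. yo ob \<le> xo ob))"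

text \<open>One step d: from (W, P, Oc) = (omega(d-1), p(d-1), O(d-1)) with choices
  lam, beta, gam and the maximum solution (xa, xo) to (W', P', Oc') = (omega(d), p(d), O(d)).\<close>
definition fttc_step where
  "fttc_step Ag Obj R W P Oc lam beta gam xa xo W' P' Oc' \<longleftrightarrow>
    (let Ot = otil Ag Obj R P Oc; Ob = obar Ag Obj R P Oc;
         Iact = active Ag Obj R W P Oc in
     (\<forall>ob\<in>Ob. (\<Sum>i\<in>Iact. lam i ob) = 1) \<and>
     (\<forall>i\<in>Iact. \<forall>ob\<in>Ob. lam i ob \<ge> 0) \<and>
     (\<forall>i\<in>Iact. \<forall>ob\<in>Oc. lam i ob > 0 \<longrightarrow> W i ob > 0) \<and>
     (\<forall>i\<in>Iact. \<forall>ob\<in>Ot. lam i ob > 0 \<longrightarrow> ob \<in> otil_agent Ag Obj R P Oc i) \<and>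
     (\<forall>i\<in>Iact. \<forall>ob\<in>Oc. 0 \<le> beta i ob \<and> beta i ob \<le> W i ob) \<and>
     (\<forall>i\<in>Iact. \<forall>ob\<in>Ob. gam i ob \<ge> 0) \<and>
     (\<forall>i\<in>Iact. (\<Sum>ob\<in>Ob. gam i ob) = 1) \<and>
     (\<forall>i\<in>Iact. \<forall>ob\<in>Ob. gam i ob > 0 \<longrightarrow> ob \<in> pointA Ag Obj R P Oc i) \<and>
     trade_max Iact Ob Oc Ot lam beta gam P xa xo \<and>
     (\<forall>i\<in>Ag. \<forall>ob\<in>Obj. W' i ob =
        (if i \<in> Iact then (if ob \<in> Oc then W i ob - lam i ob * xo ob else 0) else W i ob)) \<and>
     (\<forall>i\<in>Ag. \<forall>ob\<in>Obj. P' i ob =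
        (if i \<in> Iact then
           P i ob - (if ob \<in> otil_agent Ag Obj R P Oc i then lam i ob * xo ob else 0)
                 + (if ob \<in> Ob then gam i ob * xa i else 0)
         else P i ob)) \<and>
     Oc' = {ob \<in> Oc. (\<Sum>i\<in>Ag. W' i ob) > 0})"

text \<open>A run of an FTTC mechanism: sequences omega(d), p(d), O(d) together with the
  choices made at every step d = Suc d0 (executed iff O(d0) is nonempty); after the
  procedure stops, O stays empty.\<close>
definition fttc_run where
  "fttc_run Ag Obj R \<omega> W P Oseq lam beta gam xa xo \<longleftrightarrow>
     W 0 = \<omega> \<and> P 0 = (\<lambda>_ _. 0) \<and> Oseq 0 = Obj \<and>
     (\<forall>d. Oseq d \<noteq> {} \<longrightarrow>
        fttc_step Ag Obj R (W d) (P d) (Oseq d) (lam (Suc d)) (beta (Suc d)) (gam (Suc d))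
          (xa (Suc d)) (xo (Suc d)) (W (Suc d)) (P (Suc d)) (Oseq (Suc d))) \<and>
     (\<forall>d. Oseq d = {} \<longrightarrow> Oseq (Suc d) = {})"

end

theory Submission imports Defs begin

text \<open>Call an assignment P top-held (relative to O(d-1)) if every object an agent holds with
  positive probability is weakly preferred by her to every object of the extended set O-bar(d-1).
  This holds initially (nothing is held) and is preserved by a step: new holdings are pointed-at,
  hence maximal elements of O-bar(d-1), and O-bar can only shrink.  The shrinking in turn uses
  the invariant: the labeling of step d+1 starts inside O(d) \<subseteq> O(d-1) and follows indifferences
  to held objects; objects outside O-bar(d-1) are untouched by step d, so such an indifference
  would already have been followed by the labeling of step d, either directly or (if the agent
  was labeled earlier) through transitivity with an object she holds.\<close>

definition labeled_upto where
  "labeled_upto Ag Obj R P Oc k = fst (snd (snd (lab Ag Obj R P Oc k)))"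

definition reached_upto where
  "reached_upto Ag Obj R P Oc k = snd (snd (snd (lab Ag Obj R P Oc k)))"

definition top_held where
  "top_held Ag Obj R P Oc \<longleftrightarrow>
     (\<forall>i\<in>Ag. \<forall>ob\<in>Obj. P i ob > 0 \<longrightarrow> (\<forall>x\<in>obar Ag Obj R P Oc. R i ob x))"

context
  fixes Ag :: "'i set" and Obj :: "'o set" and R :: "'i \<Rightarrow> 'o \<Rightarrow> 'o \<Rightarrow> bool"
    and P :: "'i \<Rightarrow> 'o \<Rightarrow> real" and Oc :: "'o set"
begin

lemma lab_0:
  "layerL Ag Obj R P Oc 0 = {}" "layerT Ag Obj R P Oc 0 = Oc"
  "labeled_upto Ag Obj R P Oc 0 = {}" "reached_upto Ag Obj R P Oc 0 = Oc"
  by (simp_all add: layerL_def layerT_def labeled_upto_def reached_upto_def)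

lemma lab_Suc:
  "layerL Ag Obj R P Oc (Suc k) = {i \<in> Ag - labeled_upto Ag Obj R P Oc k.
      \<exists>ob\<in>layerT Ag Obj R P Oc k. \<exists>o'\<in>Obj - reached_upto Ag Obj R P Oc k.
        P i o' > 0 \<and> indiff R i ob o'}"
  "layerT Ag Obj R P Oc (Suc k) = (\<Union>i\<in>layerL Ag Obj R P Oc (Suc k).
      {o' \<in> Obj - reached_upto Ag Obj R P Oc k.
        P i o' > 0 \<and> (\<exists>ob\<in>layerT Ag Obj R P Oc k. indiff R i ob o')})"
  "labeled_upto Ag Obj R P Oc (Suc k) = labeled_upto Ag Obj R P Oc k \<union> layerL Ag Obj R P Oc (Suc k)"
  "reached_upto Ag Obj R P Oc (Suc k) = reached_upto Ag Obj R P Oc k \<union> layerT Ag Obj R P Oc (Suc k)"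
  "otil_lvl Ag Obj R P Oc k i = {o' \<in> Obj - reached_upto Ag Obj R P Oc k.
      P i o' > 0 \<and> (\<exists>ob\<in>layerT Ag Obj R P Oc k. indiff R i ob o')}"
  by (cases "lab Ag Obj R P Oc k";
      simp add: layerL_def layerT_def labeled_upto_def reached_upto_def otil_lvl_def Let_def)+

lemma reached_upto_eq:
  "reached_upto Ag Obj R P Oc k = Oc \<union> (\<Union>j<k. layerT Ag Obj R P Oc (Suc j))"
  by (induction k) (auto simp: lab_0 lab_Suc(4) lessThan_Suc)

lemma obar_eq_Union_reached_upto: "obar Ag Obj R P Oc = (\<Union>k. reached_upto Ag Obj R P Oc k)"
  unfolding obar_def otil_def reached_upto_eq by blast

lemma obar_eq_Union_layerT: "obar Ag Obj R P Oc = (\<Union>k. layerT Ag Obj R P Oc k)"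
proof -
  have "(\<Union>k. layerT Ag Obj R P Oc k) = layerT Ag Obj R P Oc 0 \<union> (\<Union>k. layerT Ag Obj R P Oc (Suc k))"
    by (auto simp del: lab_0) (metis not0_implies_Suc)
  then show ?thesis unfolding obar_def otil_def lab_0(2) by blast
qed

lemma layerT_subset_reached_upto: "layerT Ag Obj R P Oc k \<subseteq> reached_upto Ag Obj R P Oc k"
  by (cases k) (auto simp: lab_0 lab_Suc(4))

lemma layerT_subset_obar: "layerT Ag Obj R P Oc k \<subseteq> obar Ag Obj R P Oc"
  unfolding obar_eq_Union_layerT by blast

lemma labeled_upto_in_layerL:
  "i \<in> labeled_upto Ag Obj R P Oc k \<Longrightarrow> \<exists>j. i \<in> layerL Ag Obj R P Oc (Suc j)"
  by (induction k) (auto simp: lab_0 lab_Suc(3))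

lemma layerL_subset: "layerL Ag Obj R P Oc k \<subseteq> Ag"
  by (cases k) (auto simp: lab_0 lab_Suc(1))

lemma layerT_subset: "Oc \<subseteq> Obj \<Longrightarrow> layerT Ag Obj R P Oc k \<subseteq> Obj"
  by (cases k) (auto simp: lab_0 lab_Suc(2))

lemma obar_subset: "Oc \<subseteq> Obj \<Longrightarrow> obar Ag Obj R P Oc \<subseteq> Obj"
  unfolding obar_eq_Union_layerT using layerT_subset by blast

lemma otil_agent_subset_obar: "otil_agent Ag Obj R P Oc i \<subseteq> obar Ag Obj R P Oc"
proof
  fix x assume "x \<in> otil_agent Ag Obj R P Oc i"
  then obtain k where "i \<in> layerL Ag Obj R P Oc (Suc k)" "x \<in> otil_lvl Ag Obj R P Oc k i"
    unfolding otil_agent_def by (auto split: if_splits)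
  then have "x \<in> layerT Ag Obj R P Oc (Suc k)" by (auto simp: lab_Suc)
  then show "x \<in> obar Ag Obj R P Oc" using layerT_subset_obar by blast
qed

text \<open>If the agent is not yet labeled when ob is reached, she is labeled in the next layer
  together with x.  Otherwise she was labeled through some held t indifferent to an earlier o1;
  the invariant gives x \<succeq> t \<succeq> ob \<succeq> x, so x is indifferent to o1 and was reached with t.\<close>

lemma obar_closed_indiff_held:
  assumes trans: "\<forall>a\<in>Obj. \<forall>b\<in>Obj. \<forall>c\<in>Obj. R i a b \<longrightarrow> R i b c \<longrightarrow> R i a c"
    and top: "top_held Ag Obj R P Oc" and Oc: "Oc \<subseteq> Obj"
    and i: "i \<in> Ag" and ob: "ob \<in> obar Ag Obj R P Oc" and x: "x \<in> Obj"
    and held: "P i x > 0" and ind: "indiff R i ob x"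
  shows "x \<in> obar Ag Obj R P Oc"
proof (rule ccontr)
  let ?Ob = "obar Ag Obj R P Oc"
  assume x_out: "x \<notin> ?Ob"
  then have x_new: "x \<in> Obj - reached_upto Ag Obj R P Oc j" for j
    using x obar_eq_Union_reached_upto by blast
  obtain m where m: "ob \<in> layerT Ag Obj R P Oc m"
    using ob obar_eq_Union_layerT by blast
  have "\<exists>j. x \<in> layerT Ag Obj R P Oc (Suc j)"
  proof (cases "i \<in> labeled_upto Ag Obj R P Oc m")
    case False
    then have "i \<in> layerL Ag Obj R P Oc (Suc m)"
      unfolding lab_Suc(1) using i m x_new held ind by blast
    then show ?thesis unfolding lab_Suc(2) using m x_new held ind by blast
  next
    case True
    then obtain j where j: "i \<in> layerL Ag Obj R P Oc (Suc j)"
      using labeled_upto_in_layerL by blast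
    then obtain o1 t where o1: "o1 \<in> layerT Ag Obj R P Oc j"
      and t: "t \<in> Obj - reached_upto Ag Obj R P Oc j" and t_held: "P i t > 0"
      and ind1: "indiff R i o1 t"
      unfolding lab_Suc(1) by blast
    have "t \<in> layerT Ag Obj R P Oc (Suc j)"
      unfolding lab_Suc(2) using j t t_held ind1 o1 by blast
    then have "t \<in> ?Ob" using layerT_subset_obar by blast
    then have xt: "R i x t" using top i x held unfolding top_held_def by blast
    have "R i t ob" using top i t t_held ob unfolding top_held_def by blast
    have in_Obj: "t \<in> Obj" "o1 \<in> Obj" "ob \<in> Obj"
      using t o1 ob layerT_subset_obar obar_subset[OF Oc] by blast+
    have "R i t x" using trans in_Obj x \<open>R i t ob\<close> ind unfolding indiff_def by blast
    then have "indiff R i o1 x"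
      using trans in_Obj x xt ind1 unfolding indiff_def by meson
    then show ?thesis unfolding lab_Suc(2) using j held o1 x_new by blast
  qed
  then show False using x_out layerT_subset_obar by blast
qed

end

lemma fttc_step_P_update:
  assumes "fttc_step Ag Obj R W P Oc lam beta gam xa xo W' P' Oc'" and "i \<in> Ag" and "ob \<in> Obj"
  shows "P' i ob =
    (if i \<in> active Ag Obj R W P Oc then
       P i ob - (if ob \<in> otil_agent Ag Obj R P Oc i then lam i ob * xo ob else 0)
             + (if ob \<in> obar Ag Obj R P Oc then gam i ob * xa i else 0)
     else P i ob)"
  using assms unfolding fttc_step_def Let_def by blast

lemma fttc_step_O_subset: "fttc_step Ag Obj R W P Oc lam beta gam xa xo W' P' Oc' \<Longrightarrow> Oc' \<subseteq> Oc"
  unfolding fttc_step_def Let_def by blast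

lemma fttc_step_P_outside_obar:
  assumes st: "fttc_step Ag Obj R W P Oc lam beta gam xa xo W' P' Oc'"
    and "i \<in> Ag" "ob \<in> Obj" "ob \<notin> obar Ag Obj R P Oc"
  shows "P' i ob = P i ob"
  using fttc_step_P_update[OF st] assms otil_agent_subset_obar by fastforce

lemma fttc_step_held:
  assumes st: "fttc_step Ag Obj R W P Oc lam beta gam xa xo W' P' Oc'"
    and i: "i \<in> Ag" and ob: "ob \<in> Obj" and held: "P' i ob > 0"
  shows "P i ob > 0 \<or> ob \<in> pointA Ag Obj R P Oc i"
proof (rule disjCI)
  let ?Ob = "obar Ag Obj R P Oc" and ?Ia = "active Ag Obj R W P Oc"
  assume not_pointed: "ob \<notin> pointA Ag Obj R P Oc i"
  have lam: "\<forall>i\<in>?Ia. \<forall>ob\<in>?Ob. lam i ob \<ge> 0"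
    and gam: "\<forall>i\<in>?Ia. \<forall>ob\<in>?Ob. gam i ob > 0 \<longrightarrow> ob \<in> pointA Ag Obj R P Oc i"
    and tm: "trade_max ?Ia ?Ob Oc (otil Ag Obj R P Oc) lam beta gam P xa xo"
    using st unfolding fttc_step_def Let_def by blast+
  have xo: "\<forall>ob\<in>?Ob. xo ob \<ge> 0" and xa: "\<forall>i\<in>?Ia. xa i \<ge> 0"
    using tm unfolding trade_max_def trade_feasible_def by blast+
  have "i \<in> ?Ia \<Longrightarrow> ob \<in> ?Ob \<Longrightarrow> gam i ob * xa i \<le> 0"
    using gam xa not_pointed by (meson mult_nonpos_nonneg not_less)
  moreover have "i \<in> ?Ia \<Longrightarrow> ob \<in> otil_agent Ag Obj R P Oc i \<Longrightarrow> lam i ob * xo ob \<ge> 0"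
    using lam xo otil_agent_subset_obar[of Ag Obj R P Oc i] by (auto intro!: mult_nonneg_nonneg)
  ultimately have "P' i ob \<le> P i ob"
    using fttc_step_P_update[OF st i ob] by auto
  then show "P i ob > 0" using held by simp
qed

lemma fttc_step_obar_subset:
  assumes trans: "\<forall>i\<in>Ag. \<forall>a\<in>Obj. \<forall>b\<in>Obj. \<forall>c\<in>Obj. R i a b \<longrightarrow> R i b c \<longrightarrow> R i a c"
    and st: "fttc_step Ag Obj R W P Oc lam beta gam xa xo W' P' Oc'"
    and Oc: "Oc \<subseteq> Obj" and top: "top_held Ag Obj R P Oc"
  shows "obar Ag Obj R P' Oc' \<subseteq> obar Ag Obj R P Oc"
proof -
  let ?Ob = "obar Ag Obj R P Oc"
  have "reached_upto Ag Obj R P' Oc' k \<subseteq> ?Ob" for k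
  proof (induction k)
    case 0
    then show ?case using fttc_step_O_subset[OF st] by (auto simp: lab_0 obar_def)
  next
    case (Suc k)
    have "x \<in> ?Ob" if "x \<in> layerT Ag Obj R P' Oc' (Suc k)" for x
    proof (rule ccontr)
      assume x_out: "x \<notin> ?Ob"
      from that obtain i ob where i: "i \<in> layerL Ag Obj R P' Oc' (Suc k)" and x: "x \<in> Obj"
        and held: "P' i x > 0" and ob: "ob \<in> layerT Ag Obj R P' Oc' k" and ind: "indiff R i ob x"
        unfolding lab_Suc(2) by blast
      have iAg: "i \<in> Ag" using i layerL_subset[of Ag Obj R P' Oc'] by blast
      then have trans_i: "\<forall>a\<in>Obj. \<forall>b\<in>Obj. \<forall>c\<in>Obj. R i a b \<longrightarrow> R i b c \<longrightarrow> R i a c"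
        using trans by blast
      have "ob \<in> ?Ob" using ob layerT_subset_reached_upto[of Ag Obj R P' Oc'] Suc.IH by blast
      moreover have "P i x > 0"
        using held fttc_step_P_outside_obar[OF st iAg x x_out] by simp
      ultimately show False
        using obar_closed_indiff_held[OF trans_i top Oc iAg _ x _ ind] x_out by blast
    qed
    then show ?case using Suc.IH by (auto simp: lab_Suc(4))
  qed
  then show ?thesis unfolding obar_eq_Union_reached_upto[of Ag Obj R P' Oc'] by blast
qed

lemma fttc_step_top_held:
  assumes trans: "\<forall>i\<in>Ag. \<forall>a\<in>Obj. \<forall>b\<in>Obj. \<forall>c\<in>Obj. R i a b \<longrightarrow> R i b c \<longrightarrow> R i a c"
    and st: "fttc_step Ag Obj R W P Oc lam beta gam xa xo W' P' Oc'"
    and Oc: "Oc \<subseteq> Obj" and top: "top_held Ag Obj R P Oc"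
  shows "top_held Ag Obj R P' Oc'"
  unfolding top_held_def
proof (intro ballI impI)
  fix i ob x assume i: "i \<in> Ag" and ob: "ob \<in> Obj" and held: "P' i ob > 0"
    and "x \<in> obar Ag Obj R P' Oc'"
  then have x: "x \<in> obar Ag Obj R P Oc"
    using fttc_step_obar_subset[OF trans st Oc top] by blast
  from fttc_step_held[OF st i ob held] show "R i ob x"
  proof
    assume "P i ob > 0"
    then show ?thesis using top i ob x unfolding top_held_def by blast
  next
    assume "ob \<in> pointA Ag Obj R P Oc i"
    then show ?thesis using x unfolding pointA_def maxset_def Let_def by blast
  qed
qed

lemma fttc_run_invariant:
  assumes trans: "\<forall>i\<in>Ag. \<forall>a\<in>Obj. \<forall>b\<in>Obj. \<forall>c\<in>Obj. R i a b \<longrightarrow> R i b c \<longrightarrow> R i a c"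
    and run: "fttc_run Ag Obj R \<omega> W P Oseq lam beta gam xa xo"
  shows "Oseq n \<subseteq> Obj \<and> (Oseq n \<noteq> {} \<longrightarrow> top_held Ag Obj R (P n) (Oseq n))"
proof (induction n)
  case 0
  then show ?case using run by (simp add: fttc_run_def top_held_def)
next
  case (Suc n)
  show ?case
  proof (cases "Oseq n = {}")
    case True
    then show ?thesis using run by (simp add: fttc_run_def)
  next
    case False
    then have step: "fttc_step Ag Obj R (W n) (P n) (Oseq n) (lam (Suc n)) (beta (Suc n)) (gam (Suc n))
        (xa (Suc n)) (xo (Suc n)) (W (Suc n)) (P (Suc n)) (Oseq (Suc n))"
      using run unfolding fttc_run_def by blast
    have "Oseq n \<subseteq> Obj" "top_held Ag Obj R (P n) (Oseq n)"
      using Suc.IH False by blast+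
    then show ?thesis
      using fttc_step_O_subset[OF step] fttc_step_top_held[OF trans step] by blast
  qed
qed

theorem lemma1:
  fixes Ag :: "'i set" and Obj :: "'o set" and R :: "'i \<Rightarrow> 'o \<Rightarrow> 'o \<Rightarrow> bool"
    and \<omega> :: "'i \<Rightarrow> 'o \<Rightarrow> real"
    and W P :: "nat \<Rightarrow> 'i \<Rightarrow> 'o \<Rightarrow> real" and Oseq :: "nat \<Rightarrow> 'o set"
    and lam beta gam :: "nat \<Rightarrow> 'i \<Rightarrow> 'o \<Rightarrow> real"
    and xa :: "nat \<Rightarrow> 'i \<Rightarrow> real" and xo :: "nat \<Rightarrow> 'o \<Rightarrow> real"
    and d :: nat
  assumes "fee_problem Ag Obj R \<omega>"
    and "fttc_run Ag Obj R \<omega> W P Oseq lam beta gam xa xo"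
    and "d \<ge> 1"
    and "Oseq d \<noteq> {}"
  shows "obar Ag Obj R (P d) (Oseq d) \<subseteq> obar Ag Obj R (P (d - 1)) (Oseq (d - 1))"
proof -
  have trans: "\<forall>i\<in>Ag. \<forall>a\<in>Obj. \<forall>b\<in>Obj. \<forall>c\<in>Obj. R i a b \<longrightarrow> R i b c \<longrightarrow> R i a c"
    using assms(1) unfolding fee_problem_def by blast
  obtain D where D: "d = Suc D" using assms(3) by (cases d) auto
  have nonempty: "Oseq D \<noteq> {}" using assms(2,4) D unfolding fttc_run_def by blast
  then have "fttc_step Ag Obj R (W D) (P D) (Oseq D) (lam d) (beta d) (gam d)
      (xa d) (xo d) (W d) (P d) (Oseq d)"
    using assms(2) D unfolding fttc_run_def by blast
  then show ?thesis
    using fttc_step_obar_subset[OF trans] fttc_run_invariant[OF trans assms(2), of D] nonempty D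
    by simp
qed

end
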